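(* Let $k$ be a field of characteristic different from $2$ containing a square root of $-1$, and let $q$ be a quadratic form of dimension $n$ over $k$. (i) If $q\in I(k)$, then $\mathrm{Pf}_1(q)\leq n$; if moreover $q$ represents $1$, then $\mathrm{Pf}_1(q)\leq n-1$. (ii) If $q\in I^2(k)$, then $\mathrm{Pf}_2(q)\leq n-2$; if moreover $q$ represents $1$, then $\mathrm{Pf}_2(q)\leq n-3$.
   Context: $W(k)$ is the Witt ring, $I(k)$ its fundamental ideal (classes of even-dimensional forms), $I^m(k)$ its $m$-th power; a form is in $I^m(k)$ if its Witt class is. An $m$-fold Pfister form is $\langle\langle a_1,\ldots,a_m\rangle\rangle=\langle 1,a_1\rangle\otimes\cdots\otimes\langle 1,a_m\rangle$, $a_i\in k^\times$. For $q\in I^m(k)$, $\mathrm{Pf}_m(q)$ is the least number of terms in an expression of the Witt class of $q$ as a sum of $m$-fold Pfister forms in $W(k)$. *)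

theory Defs
  imports Main
begin

text \<open>Nondegenerate quadratic forms over a field of characteristic not 2 are
  represented by diagonal forms: the list [a1,...,an] stands for
  the form a1 x1^2 + ... + an xn^2, all ai nonzero.\<close>

definition nondeg :: "'a::field list \<Rightarrow> bool" where
  "nondeg q \<longleftrightarrow> (\<forall>a\<in>set q. a \<noteq> 0)"

definition qval :: "'a::field list \<Rightarrow> (nat \<Rightarrow> 'a) \<Rightarrow> 'a" where
  "qval q x = (\<Sum>i<length q. q ! i * (x i)^2)"

definition represents :: "'a::field list \<Rightarrow> 'a \<Rightarrow> bool" where
  "represents q c \<longleftrightarrow> (\<exists>x. qval q x = c)"

definition matapp :: "nat \<Rightarrow> (nat \<Rightarrow> nat \<Rightarrow> 'a::field) \<Rightarrow> (nat \<Rightarrow> 'a) \<Rightarrow> (nat \<Rightarrow> 'a)" where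
  "matapp n M x = (\<lambda>i. \<Sum>j<n. M i j * x j)"

definition isometric :: "'a::field list \<Rightarrow> 'a list \<Rightarrow> bool" where
  "isometric q p \<longleftrightarrow> length q = length p \<and>
     (\<exists>M N. (\<forall>i<length q. \<forall>j<length q.
               (\<Sum>l<length q. M i l * N l j) = (if i = j then 1 else 0) \<and>
               (\<Sum>l<length q. N i l * M l j) = (if i = j then 1 else 0)) \<and>
            (\<forall>x. qval p x = qval q (matapp (length q) M x)))"

text \<open>Orthogonal sum is list concatenation; tensor product of diagonal forms.\<close>
definition tensor :: "'a::field list \<Rightarrow> 'a list \<Rightarrow> 'a list" where
  "tensor a b = concat (map (\<lambda>x. map (\<lambda>y. x * y) b) a)"

definition hyp :: "nat \<Rightarrow> 'a::field list" where
  "hyp r = concat (replicate r [1, -1])"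

definition witt_eq :: "'a::field list \<Rightarrow> 'a list \<Rightarrow> bool" where
  "witt_eq q p \<longleftrightarrow> (\<exists>r s. isometric (q @ hyp r) (p @ hyp s))"

text \<open>q \<in> I^m(k): the Witt class of q is a finite sum of products of m elements of
  the fundamental ideal I(k) (classes of even-dimensional forms).  Since I(k) is closed
  under negation, finite sums of such products form the m-th power ideal.\<close>
definition in_Ipow :: "nat \<Rightarrow> 'a::field list \<Rightarrow> bool" where
  "in_Ipow m q \<longleftrightarrow> (\<exists>fs :: 'a list list list.
      (\<forall>f\<in>set fs. length f = m \<and> (\<forall>\<phi>\<in>set f. even (length \<phi>) \<and> nondeg \<phi>)) \<and>
      witt_eq q (concat (map (\<lambda>f. foldr tensor f [1]) fs)))"

definition pfister :: "'a::field list \<Rightarrow> 'a list" where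
  "pfister as = foldr (\<lambda>a p. tensor [1, a] p) as [1]"

definition Pf :: "nat \<Rightarrow> 'a::field list \<Rightarrow> nat" where
  "Pf m q = (LEAST r. \<exists>ps :: 'a list list. length ps = r \<and>
       (\<forall>p\<in>set ps. length p = m \<and> nondeg p) \<and>
       witt_eq q (concat (map pfister ps)))"

end

theory Submission
  imports Defs "HOL-Combinatorics.Permutations" "Jordan_Normal_Form.Determinant"
    "HOL-Computational_Algebra.Nth_Powers"
begin

text \<open>Since \<open>-1\<close> is a square, \<open>\<langle>a, a\<rangle> \<cong> \<langle>a, -a\<rangle>\<close> is hyperbolic, so every class in \<open>W(k)\<close>
  has order 2. Hence the sum of the 1-fold Pfister forms \<open>\<langle>\<langle>a\<rangle>\<rangle> = \<langle>1, a\<rangle>\<close> over the entries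
  \<open>a\<close> of \<open>q \<in> I(k)\<close> is \<open>q\<close> plus an even number of copies of \<open>\<langle>1\<rangle>\<close>, i.e.\ \<open>q\<close>; if
  \<open>q \<cong> \<langle>1\<rangle> \<perp> q'\<close>, the entries of \<open>q'\<close> suffice.

  A form in \<open>I\<^sup>2(k)\<close> has even dimension and square discriminant. The relation
  \<open>\<langle>b, a\<rangle> = \<langle>1, b a\<rangle> + \<langle>\<langle>b, a\<rangle>\<rangle>\<close> telescopes along \<open>q = \<langle>b, a\<^sub>1, \<dots>, a\<^sub>m, e\<rangle>\<close> into
  \<open>m\<close> copies of \<open>\<langle>1\<rangle>\<close>, the \<open>m = n - 2\<close> forms \<open>\<langle>\<langle>b a\<^sub>1 \<cdots> a\<^sub>j\<^sub>-\<^sub>1, a\<^sub>j\<rangle>\<rangle>\<close>, and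
  \<open>\<langle>b a\<^sub>1 \<cdots> a\<^sub>m, e\<rangle>\<close>, which vanishes because its discriminant is a square. For
  \<open>q \<cong> \<langle>1\<rangle> \<perp> q'\<close> the same applied to \<open>q'\<close> saves one more form.\<close>

section \<open>Isometries of diagonal forms\<close>

definition matmul :: "nat \<Rightarrow> (nat \<Rightarrow> nat \<Rightarrow> 'a::field) \<Rightarrow> (nat \<Rightarrow> nat \<Rightarrow> 'a) \<Rightarrow> nat \<Rightarrow> nat \<Rightarrow> 'a" where
  "matmul n A B = (\<lambda>i j. \<Sum>l<n. A i l * B l j)"

definition inverse_matrices :: "nat \<Rightarrow> (nat \<Rightarrow> nat \<Rightarrow> 'a::field) \<Rightarrow> (nat \<Rightarrow> nat \<Rightarrow> 'a) \<Rightarrow> bool" where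
  "inverse_matrices n M N \<longleftrightarrow> (\<forall>i<n. \<forall>j<n.
     matmul n M N i j = (if i = j then 1 else 0) \<and> matmul n N M i j = (if i = j then 1 else 0))"

lemma isometric_iff:
  "isometric q p \<longleftrightarrow> length q = length p \<and>
     (\<exists>M N. inverse_matrices (length q) M N \<and> (\<forall>x. qval p x = qval q (matapp (length q) M x)))"
  unfolding isometric_def inverse_matrices_def matmul_def by blast

lemma qval_cong: "(\<And>i. i < length q \<Longrightarrow> x i = y i) \<Longrightarrow> qval q x = qval q y"
  unfolding qval_def by (rule sum.cong) auto

lemma matapp_matapp: "matapp n A (matapp n B x) = matapp n (matmul n A B) x"
proof
  fix i
  have "matapp n A (matapp n B x) i = (\<Sum>j<n. \<Sum>l<n. A i j * (B j l * x l))"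
    unfolding matapp_def by (simp add: sum_distrib_left)
  also have "\<dots> = (\<Sum>l<n. \<Sum>j<n. A i j * (B j l * x l))" by (rule sum.swap)
  also have "\<dots> = matapp n (matmul n A B) x i"
    unfolding matapp_def matmul_def by (simp add: sum_distrib_right mult.assoc)
  finally show "matapp n A (matapp n B x) i = matapp n (matmul n A B) x i" .
qed

lemma matapp_identity:
  assumes "\<And>i j. i < n \<Longrightarrow> j < n \<Longrightarrow> M i j = (if i = j then 1 else 0)" and "i < n"
  shows "matapp n M x i = x i"
proof -
  have "matapp n M x i = (\<Sum>j<n. if i = j then x j else 0)"
    unfolding matapp_def by (rule sum.cong) (use assms in auto)
  then show ?thesis using assms(2) by simp
qed

lemma matmul_assoc: "matmul n (matmul n A B) C = matmul n A (matmul n B C)"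
proof (intro ext)
  fix i j
  have "matmul n (matmul n A B) C i j = (\<Sum>l<n. \<Sum>k<n. A i k * (B k l * C l j))"
    unfolding matmul_def by (simp add: sum_distrib_right mult.assoc)
  also have "\<dots> = (\<Sum>k<n. \<Sum>l<n. A i k * (B k l * C l j))" by (rule sum.swap)
  also have "\<dots> = matmul n A (matmul n B C) i j"
    unfolding matmul_def by (simp add: sum_distrib_left)
  finally show "matmul n (matmul n A B) C i j = matmul n A (matmul n B C) i j" .
qed

lemma matmul_identity_left:
  assumes "\<And>i j. i < n \<Longrightarrow> j < n \<Longrightarrow> M i j = (if i = j then 1 else 0)" and "i < n"
  shows "matmul n M A i j = A i j"
proof -
  have "matmul n M A i j = (\<Sum>l<n. if i = l then A l j else 0)"
    unfolding matmul_def by (rule sum.cong) (use assms in auto)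
  then show ?thesis using assms(2) by simp
qed

lemma matmul_cancel_middle:
  assumes "i < n" and I: "\<And>i j. i < n \<Longrightarrow> j < n \<Longrightarrow> matmul n M' N' i j = (if i = j then 1 else 0)"
  shows "matmul n (matmul n M M') (matmul n N' N) i j = matmul n M N i j"
proof -
  have "matmul n (matmul n M' N') N l j = N l j" if "l < n" for l
    using matmul_identity_left[OF I that] .
  then have "matmul n M (matmul n (matmul n M' N') N) i j = matmul n M N i j"
    unfolding matmul_def[of n M] by (intro sum.cong) auto
  then show ?thesis by (simp only: matmul_assoc)
qed

lemma inverse_matrices_matmul:
  assumes "inverse_matrices n M N" "inverse_matrices n M' N'"
  shows "inverse_matrices n (matmul n M M') (matmul n N' N)"
  using assms matmul_cancel_middle[of _ n M' N' M N] matmul_cancel_middle[of _ n N M N' M']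
  unfolding inverse_matrices_def by simp

lemma isometric_refl: "isometric q q"
  unfolding isometric_iff
proof (intro conjI exI)
  let ?I = "\<lambda>i j. if i = j then 1 else (0::'a)"
  show "inverse_matrices (length q) ?I ?I"
    unfolding inverse_matrices_def by (simp add: matmul_identity_left)
  show "\<forall>x. qval q x = qval q (matapp (length q) ?I x)"
    by (auto intro: qval_cong simp: matapp_identity)
qed simp

lemma isometric_sym: assumes "isometric q p" shows "isometric p q"
proof -
  from assms obtain M N where len: "length q = length p" and inv: "inverse_matrices (length q) M N"
    and e: "\<And>x. qval p x = qval q (matapp (length q) M x)" unfolding isometric_iff by blast
  have "qval p (matapp (length p) N x) = qval q x" for x
  proof -
    have "qval p (matapp (length p) N x) = qval q (matapp (length q) (matmul (length q) M N) x)"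
      using e len by (simp add: matapp_matapp)
    also have "\<dots> = qval q x"
      using inv by (intro qval_cong matapp_identity) (auto simp: inverse_matrices_def)
    finally show ?thesis .
  qed
  moreover have "inverse_matrices (length p) N M"
    using inv len unfolding inverse_matrices_def by metis
  ultimately show ?thesis unfolding isometric_iff using len by metis
qed

lemma isometric_trans [trans]: assumes "isometric q p" "isometric p r" shows "isometric q r"
proof -
  from assms(1) obtain M N where len: "length q = length p" and inv: "inverse_matrices (length q) M N"
    and e: "\<And>x. qval p x = qval q (matapp (length q) M x)" unfolding isometric_iff by blast
  from assms(2) obtain M' N' where len': "length p = length r" and inv': "inverse_matrices (length p) M' N'"
    and e': "\<And>x. qval r x = qval p (matapp (length p) M' x)" unfolding isometric_iff by blast
  have "qval r x = qval q (matapp (length q) (matmul (length q) M M') x)" for x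
    using e e' len by (simp add: matapp_matapp)
  moreover have "inverse_matrices (length q) (matmul (length q) M M') (matmul (length q) N' N)"
    using inverse_matrices_matmul[OF inv] inv' len by simp
  ultimately show ?thesis unfolding isometric_iff using len len' by metis
qed

lemma qval_Cons: "qval (a # q) x = a * (x 0)^2 + qval q (\<lambda>i. x (Suc i))"
  unfolding qval_def length_Cons by (subst sum.lessThan_Suc_shift) simp

lemma sum_lessThan_add: "(\<Sum>i<n + (m::nat). f i) = (\<Sum>i<n. f i) + (\<Sum>i<m. f (n + i))"
  by (induction m) (simp_all add: add.assoc)

lemma qval_append: "qval (q @ r) x = qval q x + qval r (\<lambda>i. x (length q + i))"
  unfolding qval_def by (simp add: sum_lessThan_add nth_append)

lemma isometric_permute_list:
  assumes \<sigma>: "\<sigma> permutes {..<length q}"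
  shows "isometric q (permute_list \<sigma> q)"
proof -
  let ?n = "length q" and ?\<tau> = "Hilbert_Choice.inv \<sigma>"
  have \<sigma>\<tau>: "\<sigma> (?\<tau> i) = i" and \<tau>\<sigma>: "?\<tau> (\<sigma> i) = i" for i
    using \<sigma> by (simp_all add: permutes_inverses)
  have \<tau>: "?\<tau> permutes {..<?n}" using \<sigma> by (rule permutes_inv)
  have \<tau>_less: "?\<tau> i < ?n" and \<sigma>_less: "\<sigma> i < ?n" if "i < ?n" for i
    using permutes_in_image[OF \<tau>] permutes_in_image[OF \<sigma>] that by simp_all
  have eq_\<sigma>_iff: "i = \<sigma> j \<longleftrightarrow> j = ?\<tau> i" for i j using \<sigma>\<tau> \<tau>\<sigma> by metis
  define M where "M = (\<lambda>i j. if i = \<sigma> j then 1 else (0::'a))"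
  define N where "N = (\<lambda>i j. if j = \<sigma> i then 1 else (0::'a))"
  have M: "matapp ?n M x i = x (?\<tau> i)" if "i < ?n" for x i
  proof -
    have "matapp ?n M x i = (\<Sum>j<?n. if j = ?\<tau> i then x j else 0)"
      unfolding matapp_def M_def by (rule sum.cong) (auto simp: eq_\<sigma>_iff)
    then show ?thesis using \<tau>_less[OF that] by simp
  qed
  have "qval (permute_list \<sigma> q) x = qval q (matapp ?n M x)" for x
  proof -
    have "qval q (matapp ?n M x) = (\<Sum>i<?n. q ! i * (x (?\<tau> i))^2)"
      unfolding qval_def by (rule sum.cong) (auto simp: M)
    also have "\<dots> = (\<Sum>j<?n. q ! \<sigma> j * (x j)^2)"
      using sum.permute[OF \<sigma>, of "\<lambda>i. q ! i * (x (?\<tau> i))^2"] by (simp add: \<tau>\<sigma>)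
    also have "\<dots> = qval (permute_list \<sigma> q) x"
      unfolding qval_def by (intro sum.cong) (auto simp: permute_list_nth[OF \<sigma>])
    finally show ?thesis by simp
  qed
  moreover have "inverse_matrices ?n M N"
    unfolding inverse_matrices_def
  proof (intro allI impI conjI)
    fix i j assume ij: "i < ?n" "j < ?n"
    have "matmul ?n M N i j = (\<Sum>l<?n. if l = ?\<tau> i then (if j = \<sigma> l then 1 else 0) else 0)"
      unfolding matmul_def M_def N_def by (rule sum.cong) (auto simp: eq_\<sigma>_iff)
    then show "matmul ?n M N i j = (if i = j then 1 else 0)"
      using \<tau>_less[OF ij(1)] \<sigma>\<tau> by auto
    have "matmul ?n N M i j = (\<Sum>l<?n. if l = \<sigma> i then (if l = \<sigma> j then 1 else 0) else 0)"
      unfolding matmul_def M_def N_def by (rule sum.cong) auto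
    then show "matmul ?n N M i j = (if i = j then 1 else 0)"
      using \<sigma>_less[OF ij(1)] \<tau>\<sigma> by (auto, metis)
  qed
  ultimately show ?thesis unfolding isometric_iff length_permute_list by blast
qed

lemma isometric_mset: assumes "mset p = mset q" shows "isometric q p"
proof -
  obtain \<sigma> where "\<sigma> permutes {..<length q}" "permute_list \<sigma> q = p"
    using mset_eq_permutation[OF assms] by blast
  then show ?thesis using isometric_permute_list by metis
qed

definition block_diag :: "nat \<Rightarrow> (nat \<Rightarrow> nat \<Rightarrow> 'a::field) \<Rightarrow> (nat \<Rightarrow> nat \<Rightarrow> 'a) \<Rightarrow> nat \<Rightarrow> nat \<Rightarrow> 'a" where
  "block_diag n A B = (\<lambda>i j. if i < n then (if j < n then A i j else 0)
                             else (if j < n then 0 else B (i - n) (j - n)))"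

lemma matmul_block_diag:
  "matmul (n + m) (block_diag n A B) (block_diag n C D) i j =
     (if i < n then (if j < n then matmul n A C i j else 0)
      else (if j < n then 0 else matmul m B D (i - n) (j - n)))"
proof -
  have "(\<Sum>l<n. block_diag n A B i l * block_diag n C D l j) = (if i < n \<and> j < n then matmul n A C i j else 0)"
    unfolding matmul_def block_diag_def by (rule trans[OF sum.cong[OF refl]]) auto
  moreover have "(\<Sum>k<m. block_diag n A B i (n + k) * block_diag n C D (n + k) j)
      = (if \<not> i < n \<and> \<not> j < n then matmul m B D (i - n) (j - n) else 0)"
    unfolding matmul_def block_diag_def by (rule trans[OF sum.cong[OF refl]]) auto
  ultimately show ?thesis unfolding matmul_def[of "n + m"] sum_lessThan_add by auto
qed

lemma inverse_matrices_block_diag: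
  assumes "inverse_matrices n M N" "inverse_matrices m M' N'"
  shows "inverse_matrices (n + m) (block_diag n M M') (block_diag n N N')"
  unfolding inverse_matrices_def matmul_block_diag
proof (intro allI impI)
  fix i j assume ij: "i < n + m" "j < n + m"
  show "(if i < n then if j < n then matmul n M N i j else 0
          else if j < n then 0 else matmul m M' N' (i - n) (j - n)) = (if i = j then 1 else 0) \<and>
        (if i < n then if j < n then matmul n N M i j else 0
          else if j < n then 0 else matmul m N' M' (i - n) (j - n)) = (if i = j then 1 else 0)"
  proof (cases "i < n"; cases "j < n")
    assume "\<not> i < n" "\<not> j < n"
    then have "i - n < m" "j - n < m" "i - n = j - n \<longleftrightarrow> i = j" using ij by auto
    then show ?thesis using assms(2) \<open>\<not> i < n\<close> \<open>\<not> j < n\<close> unfolding inverse_matrices_def by simp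
  qed (use assms(1) in \<open>auto simp: inverse_matrices_def\<close>)
qed

lemma isometric_append:
  assumes "isometric q p" "isometric q' p'"
  shows "isometric (q @ q') (p @ p')"
proof -
  from assms(1) obtain M N where len: "length q = length p" and inv: "inverse_matrices (length q) M N"
    and e: "\<And>x. qval p x = qval q (matapp (length q) M x)" unfolding isometric_iff by blast
  from assms(2) obtain M' N' where len': "length q' = length p'" and inv': "inverse_matrices (length q') M' N'"
    and e': "\<And>x. qval p' x = qval q' (matapp (length q') M' x)" unfolding isometric_iff by blast
  let ?n = "length q" and ?m = "length q'"
  have "qval (p @ p') x = qval (q @ q') (matapp (?n + ?m) (block_diag ?n M M') x)" for x
  proof -
    have "matapp (?n + ?m) (block_diag ?n M M') x i = matapp ?n M x i" if "i < ?n" for i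
      using that unfolding matapp_def sum_lessThan_add block_diag_def by simp
    moreover have "matapp (?n + ?m) (block_diag ?n M M') x (?n + i) = matapp ?m M' (\<lambda>k. x (?n + k)) i" for i
      unfolding matapp_def sum_lessThan_add block_diag_def by simp
    ultimately show ?thesis
      unfolding qval_append e e' len[symmetric] by (simp cong: qval_cong)
  qed
  then show ?thesis
    using inverse_matrices_block_diag[OF inv inv'] len len' unfolding isometric_iff by auto
qed

lemma isometric_scale:
  fixes a t :: "'a::field" assumes "t \<noteq> 0" shows "isometric [a] [a * t^2]"
  unfolding isometric_iff
proof (intro conjI exI)
  show "inverse_matrices (length [a]) (\<lambda>i j. t) (\<lambda>i j. 1 / t)"
    unfolding inverse_matrices_def matmul_def using assms by simp
  show "\<forall>x. qval [a * t^2] x = qval [a] (matapp (length [a]) (\<lambda>i j. t) x)"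
    by (simp add: qval_def matapp_def power2_eq_square algebra_simps)
qed simp

text \<open>The isometry is the substitution \<open>(u, v) \<mapsto> (x u - d y v, y u + a x v)\<close>, of
  determinant \<open>c\<close>.\<close>

lemma isometric_binary:
  fixes a d x y c :: "'a::field"
  assumes c: "a * x^2 + d * y^2 = c" and c0: "c \<noteq> 0"
  shows "isometric [a, d] [c, a * d * c]"
  unfolding isometric_iff
proof (intro conjI exI)
  define M where "M = (\<lambda>(i::nat) (j::nat). if i = 0 then (if j = 0 then x else - d * y) else (if j = 0 then y else a * x))"
  define N where "N = (\<lambda>(i::nat) (j::nat). (if i = 0 then (if j = 0 then a * x else d * y) else (if j = 0 then - y else x)) / c)"
  have sum2: "(\<Sum>j<2. f j) = f 0 + f (1::nat)" for f :: "nat \<Rightarrow> 'a" by (simp add: numeral_2_eq_2)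
  have "matmul 2 M N i j = (if i = j then 1 else 0) \<and> matmul 2 N M i j = (if i = j then 1 else 0)"
    if "i < 2" "j < 2" for i j
  proof -
    have "i = 0 \<or> i = 1" "j = 0 \<or> j = 1" using that by auto
    then show ?thesis
      unfolding matmul_def sum2 M_def N_def c[symmetric] using c c0
      by (auto simp: field_simps power2_eq_square)
  qed
  moreover have "length [a, d] = 2" by simp
  ultimately show "inverse_matrices (length [a, d]) M N" unfolding inverse_matrices_def by metis
  show "\<forall>z. qval [c, a * d * c] z = qval [a, d] (matapp (length [a, d]) M z)"
    unfolding qval_def matapp_def sum2 M_def c[symmetric]
    by (simp add: numeral_2_eq_2 power2_eq_square algebra_simps)
qed simp

lemma isometric_hyperbolic_plane:
  fixes a :: "'a::field"
  assumes a: "a \<noteq> 0" and two: "(2::'a) \<noteq> 0"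
  shows "isometric [a, -a] [1, -1]"
proof -
  let ?x = "(1 + 1/a) / 2" and ?y = "(1 - 1/a) / 2"
  have "?x - ?y = 1/a" "?x + ?y = 1"
    using two by (simp_all add: diff_divide_distrib[symmetric] add_divide_distrib[symmetric])
  moreover have "a * x^2 + (-a) * y^2 = a * ((x - y) * (x + y))" for x y
    by (simp add: algebra_simps power2_eq_square)
  ultimately have "a * ?x^2 + (-a) * ?y^2 = 1" using a by simp
  from isometric_binary[OF this] have "isometric [a, -a] [1, - (a * a)]" by simp
  moreover have "isometric ([1] @ [-1]) ([1] @ [-1 * a^2])"
    by (intro isometric_append isometric_refl isometric_scale a)
  then have "isometric [1, -1] [1, - (a * a)]" by (simp add: power2_eq_square)
  ultimately show ?thesis using isometric_trans isometric_sym by blast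
qed

section \<open>Witt equivalence\<close>

lemma length_hyp [simp]: "length (hyp r) = 2 * r"
  by (induction r) (simp_all add: hyp_def)

lemma hyp_add: "hyp (r + s) = hyp r @ hyp s"
  by (simp add: hyp_def replicate_add)

lemma witt_eq_isometric: "isometric q p \<Longrightarrow> witt_eq q p"
  unfolding witt_eq_def by (rule exI[of _ 0], rule exI[of _ 0]) (simp add: hyp_def)

lemma witt_eq_refl: "witt_eq q q"
  by (rule witt_eq_isometric[OF isometric_refl])

lemma witt_eq_sym: "witt_eq q p \<Longrightarrow> witt_eq p q"
  unfolding witt_eq_def using isometric_sym by blast

lemma witt_eq_mset: "mset q = mset p \<Longrightarrow> witt_eq q p"
  by (rule witt_eq_isometric, rule isometric_mset) simp

lemma witt_eq_append:
  assumes "witt_eq q p" "witt_eq q' p'" shows "witt_eq (q @ q') (p @ p')"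
proof -
  obtain r s where 1: "isometric (q @ hyp r) (p @ hyp s)" using assms(1) unfolding witt_eq_def by blast
  obtain r' s' where 2: "isometric (q' @ hyp r') (p' @ hyp s')" using assms(2) unfolding witt_eq_def by blast
  have "isometric ((q @ q') @ hyp (r + r')) ((q @ hyp r) @ (q' @ hyp r'))"
    unfolding hyp_add by (rule isometric_mset) simp
  also have "isometric \<dots> ((p @ hyp s) @ (p' @ hyp s'))"
    by (rule isometric_append[OF 1 2])
  also have "isometric \<dots> ((p @ p') @ hyp (s + s'))"
    unfolding hyp_add by (rule isometric_mset) simp
  finally show ?thesis unfolding witt_eq_def by blast
qed

lemma witt_eq_trans [trans]:
  assumes "witt_eq q p" "witt_eq p r" shows "witt_eq q r"
proof -
  obtain s t where 1: "isometric (q @ hyp s) (p @ hyp t)" using assms(1) unfolding witt_eq_def by blast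
  obtain s' t' where 2: "isometric (p @ hyp s') (r @ hyp t')" using assms(2) unfolding witt_eq_def by blast
  have "isometric (q @ hyp (s + s')) ((p @ hyp t) @ hyp s')"
    unfolding hyp_add using isometric_append[OF 1 isometric_refl] by simp
  also have "isometric \<dots> ((p @ hyp s') @ hyp t)"
    by (rule isometric_mset) simp
  also have "isometric \<dots> (r @ hyp (t' + t))"
    unfolding hyp_add using isometric_append[OF 2 isometric_refl] by simp
  finally show ?thesis unfolding witt_eq_def by blast
qed

lemma witt_eq_mset_trans: "witt_eq q' p' \<Longrightarrow> mset q = mset q' \<Longrightarrow> mset p' = mset p \<Longrightarrow> witt_eq q p"
  by (metis witt_eq_mset witt_eq_trans)

lemma witt_eq_append_zero: "witt_eq r [] \<Longrightarrow> witt_eq (q @ r) q"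
  using witt_eq_append[OF witt_eq_refl, of r "[]" q] by simp

lemma witt_eq_hyperbolic_plane:
  assumes "(a::'a::field) \<noteq> 0" "(2::'a) \<noteq> 0" shows "witt_eq [a, -a] []"
  using isometric_hyperbolic_plane[OF assms] unfolding witt_eq_def
  by (intro exI[of _ 0] exI[of _ 1]) (simp add: hyp_def)

section \<open>The discriminant\<close>

lemma qval_unit_vector: "j < length p \<Longrightarrow> qval p (\<lambda>i. if i = j then 1 else 0) = p ! j"
  unfolding qval_def by (simp add: if_distrib[of "\<lambda>t. _ * t^2"] cong: if_cong)

lemma qval_unit_vector_sum:
  assumes "j < length p" "k < length p" "j \<noteq> k"
  shows "qval p (\<lambda>i. (if i = j then 1 else 0) + (if i = k then 1 else 0)) = p ! j + p ! k"
proof -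
  have "qval p (\<lambda>i. (if i = j then 1 else 0) + (if i = k then 1 else 0))
     = (\<Sum>i<length p. (if i = j then p ! i else 0) + (if i = k then p ! i else 0))"
    unfolding qval_def by (rule sum.cong) (use assms in auto)
  then show ?thesis using assms by (simp add: sum.distrib)
qed

lemma matapp_unit_vector_sum:
  assumes "j < n" "k < n"
  shows "matapp n M (\<lambda>i. (if i = j then 1 else 0) + (if i = k then c else 0)) = (\<lambda>l. M l j + c * M l k)"
  unfolding matapp_def using assms
  by (simp add: distrib_left sum.distrib if_distrib[of "\<lambda>t. _ * t"] mult.commute cong: if_cong)

text \<open>The off-diagonal entries come from \<open>p(e\<^sub>j + e\<^sub>k) - p(e\<^sub>j) - p(e\<^sub>k)\<close>, which is where
  \<open>2 \<noteq> 0\<close> is needed.\<close>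

lemma isometry_polarization:
  fixes q p :: "'a::field list"
  assumes two: "(2::'a) \<noteq> 0" and len: "length q = n" "length p = n"
    and e: "\<And>x. qval p x = qval q (matapp n M x)" and jk: "j < n" "k < n"
  shows "(\<Sum>l<n. q ! l * (M l j * M l k)) = (if j = k then p ! j else 0)"
proof -
  have diag: "p ! j = (\<Sum>l<n. q ! l * (M l j * M l j))" if "j < n" for j
    using e[of "\<lambda>i. if i = j then 1 else 0"] qval_unit_vector[of j p]
      matapp_unit_vector_sum[OF that that, of M 0] len that
    by (simp add: qval_def power2_eq_square)
  show ?thesis
  proof (cases "j = k")
    case False
    have "p ! j + p ! k = qval q (\<lambda>l. M l j + M l k)"
      using e qval_unit_vector_sum[of j p k] matapp_unit_vector_sum[OF jk, of M 1] len jk False by simp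
    also have "\<dots> = p ! j + p ! k + 2 * (\<Sum>l<n. q ! l * (M l j * M l k))"
      unfolding qval_def len diag[OF jk(1)] diag[OF jk(2)]
      by (simp add: power2_eq_square sum.distrib sum_distrib_left algebra_simps)
    finally show ?thesis using two False by simp
  qed (use diag jk in simp)
qed

lemma det_mat_diag_nth: "det (mat_diag (length q) (\<lambda>i. q ! i)) = prod_list q"
proof -
  have "upper_triangular (mat_diag (length q) (\<lambda>i. q ! i))"
    unfolding upper_triangular_def mat_diag_def by simp
  then have "det (mat_diag (length q) (\<lambda>i. q ! i)) = prod_list (diag_mat (mat_diag (length q) (\<lambda>i. q ! i)))"
    by (rule det_upper_triangular[OF _ mat_diag_dim])
  also have "diag_mat (mat_diag (length q) (\<lambda>i. q ! i)) = q"
    unfolding diag_mat_def mat_diag_def by (rule nth_equalityI) simp_all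
  finally show ?thesis .
qed

lemma isometric_prod_list:
  fixes q p :: "'a::field list"
  assumes two: "(2::'a) \<noteq> 0" and iso: "isometric q p"
  shows "\<exists>d. d \<noteq> 0 \<and> prod_list p = d^2 * prod_list q"
proof -
  from iso obtain M N where len: "length q = length p" and inv: "inverse_matrices (length q) M N"
    and e: "\<And>x. qval p x = qval q (matapp (length q) M x)" unfolding isometric_iff by blast
  let ?n = "length q"
  define A where "A = mat ?n ?n (\<lambda>(i, j). M i j)"
  define B where "B = mat ?n ?n (\<lambda>(i, j). N i j)"
  have A: "A \<in> carrier_mat ?n ?n" and B: "B \<in> carrier_mat ?n ?n"
    unfolding A_def B_def by simp_all
  have "A * B = 1\<^sub>m ?n"
    using inv by (intro eq_matI)
      (auto simp: A_def B_def inverse_matrices_def matmul_def scalar_prod_def lessThan_atLeast0)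
  then have "det A \<noteq> 0" using det_mult[OF A B] det_one by (metis mult_zero_left zero_neq_one)
  have "transpose_mat A * (mat_diag ?n (\<lambda>i. q ! i) * A) = mat_diag ?n (\<lambda>i. p ! i)"
  proof (rule eq_matI)
    fix j k assume "j < dim_row (mat_diag ?n (\<lambda>i. p ! i))" "k < dim_col (mat_diag ?n (\<lambda>i. p ! i))"
    then have jk: "j < ?n" "k < ?n" by (simp_all add: mat_diag_def)
    have "(transpose_mat A * (mat_diag ?n (\<lambda>i. q ! i) * A)) $$ (j, k) = (\<Sum>l<?n. q ! l * (M l j * M l k))"
      using jk unfolding mat_diag_mult_left[OF A] by (simp add: A_def scalar_prod_def lessThan_atLeast0 algebra_simps)
    also have "\<dots> = (if j = k then p ! j else 0)"
      by (rule isometry_polarization[OF two refl len[symmetric] e jk])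
    finally show "(transpose_mat A * (mat_diag ?n (\<lambda>i. q ! i) * A)) $$ (j, k) = mat_diag ?n (\<lambda>i. p ! i) $$ (j, k)"
      using jk by (simp add: mat_diag_def)
  qed (simp_all add: A_def mat_diag_def)
  moreover have D: "mat_diag ?n (\<lambda>i. q ! i) \<in> carrier_mat ?n ?n" by simp
  ultimately have "det (mat_diag ?n (\<lambda>i. p ! i)) = det (transpose_mat A) * (det (mat_diag ?n (\<lambda>i. q ! i)) * det A)"
    using A det_mult[OF D A] det_mult[of "transpose_mat A" ?n] by (metis mult_carrier_mat transpose_carrier_mat)
  then have "det (mat_diag ?n (\<lambda>i. p ! i)) = det A * det (mat_diag ?n (\<lambda>i. q ! i)) * det A"
    using det_transpose[OF A] by (simp add: ac_simps)
  then have "prod_list p = (det A)^2 * prod_list q"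
    using det_mat_diag_nth[of q] det_mat_diag_nth[of p] len by (simp add: power2_eq_square)
  with \<open>det A \<noteq> 0\<close> show ?thesis by blast
qed

section \<open>Invariants of the powers of the fundamental ideal\<close>

lemma witt_eq_even_length: assumes "witt_eq q p" shows "even (length q) \<longleftrightarrow> even (length p)"
proof -
  obtain r s where "length (q @ hyp r) = length (p @ hyp s)"
    using assms unfolding witt_eq_def isometric_def by blast
  then show ?thesis by simp presburger
qed

lemma tensor_Cons: "tensor (x # a) b = map ((*) x) b @ tensor a b"
  by (simp add: tensor_def)

lemma length_tensor: "length (tensor a b) = length a * length b"
  by (induction a) (simp_all add: tensor_Cons tensor_def)

lemma prod_list_tensor: "prod_list (tensor a b) = prod_list a ^ length b * prod_list b ^ length a"
proof (induction a)
  case (Cons x a)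
  have "prod_list (map ((*) x) b) = x ^ length b * prod_list b"
    by (induction b) (simp_all add: algebra_simps)
  then show ?case using Cons by (simp add: tensor_Cons power_mult_distrib algebra_simps)
qed (simp add: tensor_def)

lemma length_foldr_tensor: "length (foldr tensor fs [1]) = prod_list (map length fs)"
  by (induction fs) (simp_all add: length_tensor)

lemma is_square_prod_list:
  "(\<And>x. x \<in> set xs \<Longrightarrow> is_square x) \<Longrightarrow> is_square (prod_list (xs :: 'a::comm_monoid_mult list))"
  by (induction xs) (auto intro: is_nth_power_mult)

lemma prod_list_concat: "prod_list (concat xss) = prod_list (map prod_list xss)"
  by (induction xss) simp_all

lemma in_Ipow_even_length:
  assumes "in_Ipow m q" "0 < m" shows "even (length q)"
proof -
  obtain fs :: "'a list list list" where
    fs: "\<And>f. f \<in> set fs \<Longrightarrow> length f = m \<and> (\<forall>\<phi>\<in>set f. even (length \<phi>))"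
    and w: "witt_eq q (concat (map (\<lambda>f. foldr tensor f [1]) fs))"
    using assms(1) unfolding in_Ipow_def by blast
  have "even (length (foldr tensor f [1]))" if f: "f \<in> set fs" for f
  proof -
    obtain \<phi> f' where "f = \<phi> # f'" "even (length \<phi>)"
      using fs[OF f] assms(2) by (cases f) auto
    then show ?thesis by (simp add: length_tensor)
  qed
  then have "even (length (concat (map (\<lambda>f. foldr tensor f [1]) fs)))"
    by (induction fs) auto
  then show ?thesis using witt_eq_even_length[OF w] by simp
qed

lemma in_Ipow_square_summands:
  assumes "in_Ipow m q" "2 \<le> m"
  obtains fs :: "'a::field list list"
  where "\<And>f. f \<in> set fs \<Longrightarrow> is_square (prod_list f)" "witt_eq q (concat fs)"
proof -
  obtain fs :: "'a list list list" where
    fs: "\<And>f. f \<in> set fs \<Longrightarrow> length f = m \<and> (\<forall>\<phi>\<in>set f. even (length \<phi>))"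
    and w: "witt_eq q (concat (map (\<lambda>f. foldr tensor f [1]) fs))"
    using assms(1) unfolding in_Ipow_def by blast
  have "is_square (prod_list (foldr tensor f [1]))" if f: "f \<in> set fs" for f
  proof -
    obtain \<phi> \<psi> f' where f_Cons: "f = \<phi> # \<psi> # f'" and "even (length \<phi>)" "even (length \<psi>)"
      using fs[OF f] assms(2) by (auto simp: numeral_2_eq_2 Suc_le_length_iff)
    then obtain k l where "length \<phi> = 2 * k" "length (foldr tensor (\<psi> # f') [1]) = 2 * l"
      by (auto simp: length_tensor length_foldr_tensor elim!: evenE)
    then show ?thesis
      by (simp add: f_Cons prod_list_tensor power_mult power_mult_distrib[symmetric] mult.commute[of 2])
  qed
  then show ?thesis using that[OF _ w] by auto
qed

section \<open>Splitting off a represented value\<close>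

lemma isometric_Cons_if_qval:
  fixes q :: "'a::field list"
  shows "nondeg q \<Longrightarrow> qval q x = c \<Longrightarrow> c \<noteq> 0 \<Longrightarrow> \<exists>q'. nondeg q' \<and> isometric q (c # q')"
proof (induction q arbitrary: x c)
  case (Cons a r)
  let ?d = "qval r (\<lambda>i. x (Suc i))"
  have a: "a \<noteq> 0" and nd_r: "nondeg r" using Cons.prems(1) by (auto simp: nondeg_def)
  have c: "a * (x 0)^2 + ?d = c" using Cons.prems(2) by (simp add: qval_Cons)
  show ?case
  proof (cases "?d = 0")
    case True
    then have "x 0 \<noteq> 0" using c Cons.prems(3) by auto
    then have "isometric ([a] @ r) ([a * (x 0)^2] @ r)"
      by (intro isometric_append isometric_scale isometric_refl)
    then show ?thesis using nd_r c True by auto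
  next
    case False
    obtain r' where nd_r': "nondeg r'" and r: "isometric r (?d # r')"
      using Cons.IH[OF nd_r refl False] by blast
    have "isometric ([a] @ r) ([a] @ [?d] @ r')"
      using r by (intro isometric_append isometric_refl) simp
    moreover have "a * (x 0)^2 + ?d * 1^2 = c" using c by simp
    then have "isometric ([a, ?d] @ r') ([c, a * ?d * c] @ r')"
      using Cons.prems(3) by (intro isometric_append isometric_binary isometric_refl)
    ultimately have "isometric (a # r) (c # (a * ?d * c) # r')"
      using isometric_trans by fastforce
    moreover have "nondeg ((a * ?d * c) # r')"
      using nd_r' a False Cons.prems(3) by (simp add: nondeg_def)
    ultimately show ?thesis by blast
  qed
qed (simp add: qval_def)

section \<open>Sums of Pfister forms\<close>

lemma Pf_le:
  assumes "length ps = r" "\<And>p. p \<in> set ps \<Longrightarrow> length p = m \<and> nondeg p"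
    and "witt_eq q (concat (map pfister ps))"
  shows "Pf m q \<le> r"
  unfolding Pf_def by (rule Least_le) (use assms in blast)

lemma pfister_single: "pfister [a] = [1, a]"
  by (simp add: pfister_def tensor_def)

lemma pfister_pair: "pfister [b, a] = [1, a, b, b * a]"
  by (simp add: pfister_def tensor_def)

fun pfister_chain :: "'a::field \<Rightarrow> 'a list \<Rightarrow> 'a list list" where
  "pfister_chain b [] = []"
| "pfister_chain b (a # as) = [b, a] # pfister_chain (b * a) as"

lemma length_pfister_chain: "length (pfister_chain b as) = length as"
  by (induction as arbitrary: b) simp_all

lemma nondeg_pfister_chain:
  "b \<noteq> 0 \<Longrightarrow> nondeg as \<Longrightarrow> p \<in> set (pfister_chain b as) \<Longrightarrow> length p = 2 \<and> nondeg p"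
proof (induction as arbitrary: b)
  case (Cons a as)
  have ba: "b * a \<noteq> 0" "nondeg as" and "nondeg [b, a]"
    using Cons.prems(1,2) by (simp_all add: nondeg_def)
  then show ?case using Cons.IH[OF ba] Cons.prems(3) by auto
qed simp

context
  fixes i :: "'a::field"
  assumes two: "(2::'a) \<noteq> 0" and i: "i * i = -1"
begin

lemma witt_eq_double_zero:
  fixes a :: 'a assumes "a \<noteq> 0" shows "witt_eq [a, a] []"
proof -
  have "isometric ([a] @ [a]) ([a] @ [a * i^2])"
    using i by (intro isometric_append isometric_refl isometric_scale) auto
  then have "witt_eq [a, a] [a, -a]"
    using i by (simp add: witt_eq_isometric power2_eq_square)
  then show ?thesis using witt_eq_hyperbolic_plane[OF assms two] by (rule witt_eq_trans)
qed

lemma witt_eq_replicate_one_zero: "witt_eq (replicate (2 * k) (1::'a)) []"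
proof (induction k)
  case (Suc k)
  have "witt_eq ([1, 1] @ replicate (2 * k) (1::'a)) ([] @ [])"
    using witt_eq_append[OF witt_eq_double_zero[of 1] Suc] by simp
  then show ?case by simp
qed (simp add: witt_eq_refl)

lemma witt_eq_replicate_one_parity:
  assumes "even (j + k)" shows "witt_eq (replicate j (1::'a) @ q) (replicate k 1 @ q)"
proof -
  have shift: "witt_eq (replicate (j + 2 * m) 1 @ q) (replicate j 1 @ q)" for j m
  proof -
    have "witt_eq ((replicate j 1 @ q) @ replicate (2 * m) 1) (replicate j 1 @ q)"
      by (rule witt_eq_append_zero[OF witt_eq_replicate_one_zero])
    then show ?thesis by (rule witt_eq_mset_trans) (simp_all add: replicate_add)
  qed
  show ?thesis
  proof (cases "j \<le> k")
    case True
    moreover have "even (k - j)" using assms True by auto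
    ultimately obtain m where "k = j + 2 * m" by (metis evenE le_add_diff_inverse)
    then show ?thesis using shift witt_eq_sym by metis
  next
    case False
    moreover have "even (j - k)" using assms False by auto
    ultimately obtain m where "j = k + 2 * m" by (metis evenE le_add_diff_inverse nat_le_linear)
    then show ?thesis using shift by metis
  qed
qed

text \<open>The product of the entries stands for the discriminant: as \<open>-1\<close> is a square, the sign
  of the signed discriminant does not matter.\<close>

lemma witt_eq_is_square_prod_list:
  fixes q p :: "'a list"
  assumes "witt_eq q p" "is_square (prod_list p)" shows "is_square (prod_list q)"
proof -
  obtain r u where "isometric (q @ hyp r) (p @ hyp u)" using assms(1) unfolding witt_eq_def by blast
  from isometric_prod_list[OF two this] obtain d
    where d: "d \<noteq> 0" "prod_list (p @ hyp u) = d^2 * prod_list (q @ hyp r)" by blast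
  obtain s where s: "prod_list p = s^2" using assms(2) by (auto elim: is_nth_powerE)
  have prod_hyp: "prod_list (hyp k) = (i^k)^2" for k
  proof -
    have "prod_list (hyp k) = (i * i)^k" using i by (induction k) (simp_all add: hyp_def)
    then show ?thesis by (simp add: power2_eq_square power_mult_distrib)
  qed
  have "i \<noteq> 0" using i by auto
  with d s have "prod_list q = (s * i^u / (d * i^r))^2"
    by (simp add: prod_hyp power_mult_distrib power_divide field_simps)
  then show ?thesis by (rule is_nth_powerI)
qed

lemma in_Ipow_is_square_prod_list:
  fixes q :: "'a list"
  assumes "in_Ipow m q" "2 \<le> m" shows "is_square (prod_list q)"
proof -
  obtain fs where "\<And>f. f \<in> set fs \<Longrightarrow> is_square (prod_list f)" and w: "witt_eq q (concat fs)"
    using in_Ipow_square_summands[OF assms] by blast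
  then have "is_square (prod_list (concat fs))"
    unfolding prod_list_concat by (intro is_square_prod_list) auto
  then show ?thesis by (rule witt_eq_is_square_prod_list[OF w])
qed

lemma witt_eq_binary_zero:
  fixes a b :: 'a
  assumes a: "a \<noteq> 0" and b: "b \<noteq> 0" and ab: "is_square (a * b)" shows "witt_eq [a, b] []"
proof -
  obtain s where s: "a * b = s^2" using ab by (auto elim: is_nth_powerE)
  then have "s \<noteq> 0" using a b by auto
  then have "isometric [a] [a * (s / a)^2]" using a by (intro isometric_scale) simp
  moreover have "a * (s / a)^2 = b" using a s by (simp add: power2_eq_square field_simps)
  ultimately have "isometric ([a] @ [a]) ([a] @ [b])" using isometric_append isometric_refl by metis
  then have "witt_eq [a, b] [a, a]" by (simp add: witt_eq_isometric isometric_sym)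
  then show ?thesis using witt_eq_double_zero[OF a] by (rule witt_eq_trans)
qed

lemma Pf_1_le:
  fixes q p :: "'a list"
  assumes "nondeg p" "witt_eq q (replicate k 1 @ p)" "even (k + length p)"
  shows "Pf 1 q \<le> length p"
proof (rule Pf_le)
  have "witt_eq q (replicate (length p) 1 @ p)"
    by (rule witt_eq_trans[OF assms(2) witt_eq_replicate_one_parity[OF assms(3)]])
  moreover have "mset (replicate (length p) 1 @ p) = mset (concat (map pfister (map (\<lambda>a. [a]) p)))"
    by (induction p) (simp_all add: pfister_single)
  ultimately show "witt_eq q (concat (map pfister (map (\<lambda>a. [a]) p)))"
    by (metis witt_eq_mset_trans)
qed (use assms(1) in \<open>auto simp: nondeg_def\<close>)

text \<open>The basic relation \<open>\<langle>b, a\<rangle> = \<langle>1, b a\<rangle> + \<langle>\<langle>b, a\<rangle>\<rangle>\<close> in \<open>W(k)\<close>: the difference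
  is \<open>\<langle>1, 1, b a, b a\<rangle> = 2\<langle>1, b a\<rangle>\<close>, which vanishes because \<open>-1\<close> is a square.\<close>

lemma witt_eq_binary_pfister:
  fixes a b :: 'a
  assumes "a \<noteq> 0" "b \<noteq> 0" shows "witt_eq [b, a] ([1, b * a] @ pfister [b, a])"
proof -
  have "witt_eq ([1, 1] @ [b * a, b * a]) ([] @ [])"
    using assms by (intro witt_eq_append witt_eq_double_zero) simp_all
  then have "witt_eq ([b, a] @ [1, 1] @ [b * a, b * a]) [b, a]"
    by (intro witt_eq_append_zero) simp
  then have "witt_eq ([1, b * a] @ pfister [b, a]) [b, a]"
    by (rule witt_eq_mset_trans) (simp_all add: pfister_pair add_mset_commute)
  then show ?thesis by (rule witt_eq_sym)
qed

lemma witt_eq_pfister_chain: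
  fixes b :: 'a
  shows "nondeg (b # as) \<Longrightarrow> witt_eq (b # as)
     (replicate (length as) 1 @ [b * prod_list as] @ concat (map pfister (pfister_chain b as)))"
proof (induction as arbitrary: b)
  case (Cons a as)
  have a: "a \<noteq> 0" and b: "b \<noteq> 0" and nd: "nondeg ((b * a) # as)"
    using Cons.prems by (auto simp: nondeg_def)
  let ?R = "replicate (length as) 1 @ [b * a * prod_list as] @ concat (map pfister (pfister_chain (b * a) as))"
  have "witt_eq ([b, a] @ as) (([1, b * a] @ pfister [b, a]) @ as)"
    by (rule witt_eq_append[OF witt_eq_binary_pfister[OF a b] witt_eq_refl])
  moreover have "witt_eq (([1] @ pfister [b, a]) @ ((b * a) # as)) (([1] @ pfister [b, a]) @ ?R)"
    by (rule witt_eq_append[OF witt_eq_refl Cons.IH[OF nd]])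
  ultimately have "witt_eq ([b, a] @ as) (([1] @ pfister [b, a]) @ ?R)"
    by (rule witt_eq_trans[OF _ witt_eq_mset_trans]) (simp_all add: ac_simps)
  then show ?case
    by (rule witt_eq_mset_trans) (simp_all add: mult.assoc ac_simps)
qed (simp add: witt_eq_refl)

lemma witt_eq_pfister_chain_square:
  fixes b e :: 'a
  assumes nd: "nondeg (b # as @ [e])" and sq: "is_square (prod_list (b # as @ [e]))"
  shows "witt_eq (b # as @ [e]) (replicate (length as) 1 @ concat (map pfister (pfister_chain b as)))"
proof -
  let ?P = "b * prod_list as" and ?C = "concat (map pfister (pfister_chain b as))"
  have P: "?P \<noteq> 0" and e: "e \<noteq> 0" using nd by (auto simp: nondeg_def prod_list_zero_iff)
  have "nondeg (b # as)" using nd by (simp add: nondeg_def)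
  from witt_eq_append[OF witt_eq_pfister_chain[OF this] witt_eq_refl[of "[e]"]]
  have "witt_eq (b # as @ [e]) ((replicate (length as) 1 @ [?P] @ ?C) @ [e])" by simp
  moreover have "witt_eq ((replicate (length as) 1 @ ?C) @ [?P, e]) (replicate (length as) 1 @ ?C)"
    using sq by (intro witt_eq_append_zero witt_eq_binary_zero P e) (simp add: mult.assoc)
  ultimately show ?thesis
    by (rule witt_eq_trans[OF _ witt_eq_mset_trans]) simp_all
qed

lemma witt_eq_replicate_one_if_length_le_1:
  fixes p :: "'a list"
  assumes "length p \<le> 1" "nondeg p" "is_square (prod_list p)"
  shows "witt_eq p (replicate (length p) 1)"
proof (cases p)
  case (Cons e p')
  then obtain s where "p = [e]" "e = 1 * s^2" using assms by (auto elim: is_nth_powerE)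
  moreover have "s \<noteq> 0" using assms(2) calculation by (auto simp: nondeg_def)
  then have "isometric [1] [1 * s^2]" by (rule isometric_scale)
  ultimately show ?thesis by (simp add: isometric_sym witt_eq_isometric)
qed (simp add: witt_eq_refl)

lemma Pf_2_le:
  fixes q p :: "'a list"
  assumes nd: "nondeg p" and sq: "is_square (prod_list p)"
    and w: "witt_eq q (replicate k 1 @ p)" and even: "even (k + length p)"
  shows "Pf 2 q \<le> length p - 2"
proof (cases "length p \<le> 1")
  case True
  note w
  also have "witt_eq (replicate k 1 @ p) (replicate (k + length p) 1 @ [])"
    using witt_eq_append[OF witt_eq_refl witt_eq_replicate_one_if_length_le_1[OF True nd sq]]
    by (simp add: replicate_add)
  also have "witt_eq \<dots> (replicate 0 1 @ [])"
    using even by (intro witt_eq_replicate_one_parity) simp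
  finally show ?thesis using True by (intro Pf_le[where ps = "[]"]) auto
next
  case False
  then obtain b r where "p = b # r" "r \<noteq> []" by (cases p) auto
  then obtain as e where p: "p = b # as @ [e]" using append_butlast_last_id by metis
  let ?ps = "pfister_chain b as"
  note w
  also have "witt_eq (replicate k 1 @ p) (replicate k 1 @ replicate (length as) 1 @ concat (map pfister ?ps))"
    using nd sq unfolding p by (intro witt_eq_append witt_eq_refl witt_eq_pfister_chain_square)
  also have "\<dots> = replicate (k + length as) 1 @ concat (map pfister ?ps)"
    by (simp add: replicate_add)
  also have "witt_eq \<dots> (replicate 0 1 @ concat (map pfister ?ps))"
    using even p by (intro witt_eq_replicate_one_parity) simp
  finally have "witt_eq q (replicate 0 1 @ concat (map pfister ?ps))" .
  moreover have "b \<noteq> 0" "nondeg as" using nd by (auto simp: p nondeg_def)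
  ultimately show ?thesis
    by (intro Pf_le) (auto simp: length_pfister_chain p dest: nondeg_pfister_chain)
qed

end

theorem proposition2p1:
  fixes q :: "'a::field list" and n :: nat
  assumes char: "(2::'a) \<noteq> 0"
    and sqrtm1: "\<exists>i::'a. i * i = -1"
    and nd: "nondeg q"
    and dim: "n = length q"
  shows "(in_Ipow 1 q \<longrightarrow> Pf 1 q \<le> n) \<and>
         (in_Ipow 1 q \<and> represents q 1 \<longrightarrow> Pf 1 q \<le> n - 1) \<and>
         (in_Ipow 2 q \<longrightarrow> Pf 2 q \<le> n - 2) \<and>
         (in_Ipow 2 q \<and> represents q 1 \<longrightarrow> Pf 2 q \<le> n - 3)"
proof -
  obtain i :: 'a where i: "i * i = -1" using sqrtm1 by blast
  have q: "witt_eq q (replicate 0 1 @ q)" by (simp add: witt_eq_refl)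
  have even: "even n" if "in_Ipow m q" "0 < m" for m
    using in_Ipow_even_length[OF that] dim by simp
  have square: "is_square (prod_list q)" if "in_Ipow 2 q"
    using in_Ipow_is_square_prod_list[OF char i that] by simp
  have split_one: "\<exists>q'. nondeg q' \<and> witt_eq q (replicate 1 1 @ q') \<and> n = Suc (length q')"
    if "represents q 1"
  proof -
    from that obtain x where "qval q x = 1" unfolding represents_def by blast
    with isometric_Cons_if_qval[OF nd] obtain q' where "nondeg q'" "isometric q (1 # q')" by fastforce
    moreover from this(2) have "length q = Suc (length q')" unfolding isometric_def by simp
    ultimately show ?thesis using dim witt_eq_isometric by auto
  qed
  show ?thesis
  proof (intro conjI impI)
    assume "in_Ipow 1 q"
    then show "Pf 1 q \<le> n" using Pf_1_le[OF char i nd q] even dim by auto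
  next
    assume "in_Ipow 1 q \<and> represents q 1"
    then show "Pf 1 q \<le> n - 1" using Pf_1_le[OF char i] even split_one by fastforce
  next
    assume "in_Ipow 2 q"
    then show "Pf 2 q \<le> n - 2" using Pf_2_le[OF char i nd square q] even dim by auto
  next
    assume "in_Ipow 2 q \<and> represents q 1"
    then obtain q' where I2: "in_Ipow 2 q"
      and q': "nondeg q'" "witt_eq q (replicate 1 1 @ q')" "n = Suc (length q')"
      using split_one by blast
    have "is_square (prod_list q')"
      using witt_eq_is_square_prod_list[OF char i witt_eq_sym[OF q'(2)] square[OF I2]] by simp
    then show "Pf 2 q \<le> n - 3" using Pf_2_le[OF char i q'(1) _ q'(2)] even[OF I2] q'(3) by simp
  qed
qed

end
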